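(* Let $q=2^m$ with $m$ a positive integer, let $b\in\mathbb{F}_q^*$ and $\delta\in\mathbb{F}_{q^2}\setminus\mathbb{F}_q$, and let $i$ be a non-negative integer. Put $$A=b\,\mathrm{Tr}_{q^2/q}(\delta)^{2^i},\quad B=b\,\mathrm{Tr}_{q^2/q}(\delta)^{2^i}\delta^{2q+2},\quad C=\mathrm{Tr}_{q^2/q}(\delta)^2,\quad D=1/A,$$ and define $S_{-1}=0$, $S_0=1$, $S_k=C^{2^{k-1}}S_{k-1}+D^{2^{k-1}}S_{k-2}$ for $k\geq1$. If the polynomial $$P(x)=b(x^q+x+\delta)^{2q+2^i+2}+x$$ permutes $\mathbb{F}_{q^2}$, then its compositional inverse over $\mathbb{F}_{q^2}$ is $$P^{-1}(x)=x+b\left(\delta+\sum_{k=0}^{m-1}\left(D^{2^k}S_{m-2-k}^{2^{k+1}}+D^{1-2^{k}}S_k\right)\left(x^q+x+B\right)^{2^k}\right)^{2q+2^i+2}.$$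
   Context: $\mathrm{Tr}_{q^2/q}(y)=y+y^q$. The compositional inverse of a permutation polynomial $f$ of $\mathbb{F}_{Q}$ is the unique polynomial $f^{-1}$ (modulo $x^Q-x$) with $f(f^{-1}(c))=f^{-1}(f(c))=c$ for all $c\in\mathbb{F}_Q$. *)

theory Defs
  imports Main "HOL-Library.Cardinality"
begin

definition trace2 :: "nat \<Rightarrow> 'a::field \<Rightarrow> 'a" where
  "trace2 q y = y + y ^ q"

text \<open>Shifted sequence: Sseq C D (j+1) = S_j, so Sseq C D 0 = S_{-1} = 0, Sseq C D 1 = S_0 = 1,
  and S_k = C^(2^(k-1)) S_{k-1} + D^(2^(k-1)) S_{k-2} for k >= 1.\<close>
fun Sseq :: "'a::field \<Rightarrow> 'a \<Rightarrow> nat \<Rightarrow> 'a" where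
  "Sseq C D 0 = 0"
| "Sseq C D (Suc 0) = 1"
| "Sseq C D (Suc (Suc n)) = C ^ (2 ^ n) * Sseq C D (Suc n) + D ^ (2 ^ n) * Sseq C D n"

definition S :: "'a::field \<Rightarrow> 'a \<Rightarrow> int \<Rightarrow> 'a" where
  "S C D j = Sseq C D (nat (j + 1))"

end

theory Submission
  imports Defs "HOL-Computational_Algebra.Polynomial"
begin

text \<open>
  Write Tr x = x^q + x and h t = b (t + \<delta>)^(2q + 2^i + 2), so that P x = h (Tr x) + x. For t in
  F_q one finds Tr (h t) = A (t^4 + C t^2) + B, hence Tr (P x) + B = A L (Tr x) for the linearized
  polynomial L x = x^4 + C x^2 + D x with D = 1/A. Injectivity of P forces L to be injective on
  F_q, and then y \<mapsto> y + h (R (Tr y + B)) inverts P for every R with L (R u) = D u on F_q.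

  The R of the theorem, R u = \<Sum>k<m. c_k u^(2^k), satisfies L (R u) = D \<tau> u, where \<tau> is the
  trace of the product M_(m-1) \<cdots> M_0 of the matrices M_k = [[C^(2^k), D^(2^k)], [1, 0]]; the
  entries of such products are values of S. As C and D lie in F_q, the entrywise square of this
  product is its conjugate by M_0, so \<tau>^2 = \<tau>. Finally \<tau> = 0 is impossible: L would
  annihilate R on F_q, so R would vanish on F_q and all its coefficients would be zero. This
  determines enough values of S to make L annihilate also the part of R coming from the summands
  D^(1-2^k) S_k, whose constant coefficient is 1.
\<close>

section \<open>Characteristic two and finite fields\<close>

lemma char2_add_self:
  fixes x :: "'a::ring_1"
  assumes char2: "(1::'a) + 1 = 0"
  shows "x + x = 0"
proof -
  have "x + x = x * (1 + 1)" by (simp only: distrib_left mult_1_right)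
  with char2 show ?thesis by simp
qed

lemma char2_minus:
  fixes x :: "'a::ring_1"
  assumes char2: "(1::'a) + 1 = 0"
  shows "- x = x"
  using char2_add_self[OF char2, of x] by (simp add: add_eq_0_iff)

lemma char2_add_eq_0_iff:
  fixes x y :: "'a::ring_1"
  assumes char2: "(1::'a) + 1 = 0"
  shows "x + y = 0 \<longleftrightarrow> x = y"
  by (metis add_eq_0_iff char2_minus[OF char2])

lemma char2_add_add_self:
  fixes x :: "'a::ring_1"
  assumes char2: "(1::'a) + 1 = 0"
  shows "x + y + x = y"
proof -
  have "x + y + x = y + (x + x)" by (simp add: algebra_simps)
  then show ?thesis by (simp add: char2_add_self[OF char2])
qed

lemma char2_square_add:
  fixes x y :: "'a::comm_ring_1"
  assumes char2: "(1::'a) + 1 = 0"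
  shows "(x + y) ^ 2 = x ^ 2 + y ^ 2"
  using char2_add_self[OF char2, of "x * y"] by (simp add: power2_sum mult_2 algebra_simps)

lemma char2_power_two_power_add:
  fixes x y :: "'a::comm_ring_1"
  assumes char2: "(1::'a) + 1 = 0"
  shows "(x + y) ^ (2 ^ k) = x ^ (2 ^ k) + y ^ (2 ^ k)"
proof (induction k)
  case (Suc k)
  have sq: "z ^ (2 ^ Suc k) = (z ^ (2 ^ k)) ^ 2" for z :: 'a
    by (simp add: power_mult[symmetric] mult.commute)
  show ?case unfolding sq Suc char2_square_add[OF char2] ..
qed simp

lemma char2_power_two_power_sum:
  fixes f :: "'b \<Rightarrow> 'a::comm_ring_1"
  assumes char2: "(1::'a) + 1 = 0"
  shows "(sum f A) ^ (2 ^ k) = (\<Sum>i\<in>A. f i ^ (2 ^ k))"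
  by (induction A rule: infinite_finite_induct)
    (simp_all add: char2_power_two_power_add[OF char2] power_0_left)

lemma power_two_power_power_two_power:
  fixes x :: "'a::monoid_mult"
  shows "(x ^ (2 ^ a)) ^ (2 ^ b) = x ^ (2 ^ (a + b))"
  by (simp add: power_mult[symmetric] power_add)

lemma power_fixed_power:
  fixes x :: "'a::comm_monoid_mult"
  assumes "x ^ n = x"
  shows "(x ^ j) ^ n = x ^ j"
  by (metis assms power_mult mult.commute)

lemma power_pred_eq_one:
  fixes x :: "'a::field"
  assumes "x ^ n = x" and "x \<noteq> 0" and "0 < n"
  shows "x ^ (n - 1) = 1"
proof -
  have "x ^ (n - 1) * x = x * 1" using assms by (simp flip: power_Suc2)
  then show ?thesis using \<open>x \<noteq> 0\<close> by (metis mult.commute mult_left_cancel)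
qed

lemma inverse_power_fourth:
  fixes A D :: "'a::field"
  assumes AD: "A * D = 1" and A1: "A ^ (2 ^ (n + 2) - 1) = 1"
  shows "(A ^ (2 ^ (n + 1) - 1)) ^ 4 = D ^ 2"
proof -
  obtain r where r: "(2::nat) ^ n = Suc r" by (metis not0_implies_Suc power_not_zero zero_neq_numeral)
  have e: "(2 ^ (n + 1) - 1) * 4 + 2 = (2 ^ (n + 2) - 1) * (2::nat)"
    using r by (simp add: power_add)
  have "(A ^ (2 ^ (n + 1) - 1)) ^ 4 * A ^ 2 = (A ^ (2 ^ (n + 2) - 1)) ^ 2"
    by (simp only: power_mult[symmetric] power_add[symmetric] e)
  then have X: "(A ^ (2 ^ (n + 1) - 1)) ^ 4 * A ^ 2 = 1" using A1 by simp
  have "(A ^ (2 ^ (n + 1) - 1)) ^ 4 = (A ^ (2 ^ (n + 1) - 1)) ^ 4 * (A * D) ^ 2" by (simp add: AD)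
  also have "\<dots> = ((A ^ (2 ^ (n + 1) - 1)) ^ 4 * A ^ 2) * D ^ 2"
    by (simp only: power_mult_distrib mult.assoc)
  finally show ?thesis unfolding X by simp
qed

lemma power_card_eq_self:
  fixes x :: "'a::{field,finite}"
  shows "x ^ CARD('a) = x"
proof (cases "x = 0")
  case False
  let ?U = "UNIV - {0::'a}"
  have inj: "inj_on ((*) x) ?U" using False by (auto simp: inj_on_def)
  have img: "(*) x ` ?U = ?U"
  proof
    show "(*) x ` ?U \<subseteq> ?U" using False by auto
    show "?U \<subseteq> (*) x ` ?U"
    proof
      fix y assume "y \<in> ?U"
      then have "y = x * (y / x)" "y / x \<in> ?U" using False by auto
      then show "y \<in> (*) x ` ?U" by blast
    qed
  qed
  have "prod id ?U = prod id ((*) x ` ?U)" using img by simp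
  also have "\<dots> = prod ((*) x) ?U" using prod.reindex[OF inj, of id] by simp
  also have "\<dots> = x ^ card ?U * prod id ?U" by (simp add: prod.distrib)
  finally have "x ^ card ?U * prod id ?U = 1 * prod id ?U" by simp
  moreover have "prod id ?U \<noteq> 0" by (simp add: prod_zero_iff)
  ultimately have "x ^ card ?U = 1" by simp
  moreover have "card ?U + 1 = CARD('a)" by (simp add: card_Diff_subset)
  ultimately show ?thesis by (metis power_Suc2 mult_1 Suc_eq_plus1)
qed (simp add: zero_power)

lemma char2_of_even_card:
  assumes "even CARD('a::{field,finite})"
  shows "(1::'a) + 1 = 0"
proof -
  have "(-1::'a) = (-1) ^ CARD('a)" by (rule power_card_eq_self[symmetric])
  also have "\<dots> = 1" using assms by simp
  finally have "(1::'a) = - 1" by simp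
  then show ?thesis by (simp add: eq_neg_iff_add_eq_0)
qed

section \<open>The sequence S as a product of 2 by 2 matrices\<close>

datatype 'a mat2 = Mat2 'a 'a 'a 'a

abbreviation mat2_one :: "'a::comm_ring_1 mat2" where
  "mat2_one \<equiv> Mat2 1 0 0 1"

fun mat2_mult :: "'a::comm_ring_1 mat2 \<Rightarrow> 'a mat2 \<Rightarrow> 'a mat2" where
  "mat2_mult (Mat2 a b c d) (Mat2 e f g h) = Mat2 (a*e + b*g) (a*f + b*h) (c*e + d*g) (c*f + d*h)"

fun mat2_trace :: "'a::comm_ring_1 mat2 \<Rightarrow> 'a" where
  "mat2_trace (Mat2 a b c d) = a + d"

fun mat2_frob :: "'a::comm_ring_1 mat2 \<Rightarrow> 'a mat2" where
  "mat2_frob (Mat2 a b c d) = Mat2 (a^2) (b^2) (c^2) (d^2)"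

lemma mat2_mult_assoc: "mat2_mult (mat2_mult X Y) Z = mat2_mult X (mat2_mult Y Z)"
  by (cases X; cases Y; cases Z) (simp add: algebra_simps)

lemma mat2_mult_one [simp]: "mat2_mult X mat2_one = X" "mat2_mult mat2_one X = X"
  by (cases X; simp)+

lemma mat2_trace_mult_commute: "mat2_trace (mat2_mult X Y) = mat2_trace (mat2_mult Y X)"
  by (cases X; cases Y) (simp add: algebra_simps)

lemma mat2_frob_mult:
  assumes char2: "(1::'a::comm_ring_1) + 1 = 0"
  shows "mat2_frob (mat2_mult X Y) = mat2_mult (mat2_frob X) (mat2_frob (Y::'a mat2))"
  by (cases X; cases Y) (simp add: char2_square_add[OF char2] power_mult_distrib)

lemma mat2_trace_frob:
  assumes char2: "(1::'a::comm_ring_1) + 1 = 0"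
  shows "mat2_trace (mat2_frob X) = mat2_trace (X::'a mat2) ^ 2"
  by (cases X) (simp add: char2_square_add[OF char2])

definition Sseq_step :: "'a::field \<Rightarrow> 'a \<Rightarrow> nat \<Rightarrow> 'a mat2" where
  "Sseq_step C D k = Mat2 (C ^ (2 ^ k)) (D ^ (2 ^ k)) 1 0"

fun Sseq_prod :: "'a::field \<Rightarrow> 'a \<Rightarrow> nat \<Rightarrow> nat \<Rightarrow> 'a mat2" where
  "Sseq_prod C D s 0 = mat2_one"
| "Sseq_prod C D s (Suc n) = mat2_mult (Sseq_step C D (s + n)) (Sseq_prod C D s n)"

lemma mat2_frob_Sseq_step: "mat2_frob (Sseq_step C D k) = Sseq_step C D (Suc k)"
  by (simp add: Sseq_step_def power_mult[symmetric] mult.commute)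

lemma mat2_frob_Sseq_prod:
  assumes char2: "(1::'a::field) + 1 = 0"
  shows "mat2_frob (Sseq_prod C D s n) = Sseq_prod (C::'a) D (Suc s) n"
  by (induction n) (simp_all add: mat2_frob_mult[OF char2] mat2_frob_Sseq_step)

lemma Sseq_prod_Suc_right:
  "Sseq_prod C D s (Suc n) = mat2_mult (Sseq_prod C D (Suc s) n) (Sseq_step C D s)"
  by (induction n) (simp_all add: mat2_mult_assoc)

lemma Sseq_prod_eq:
  assumes char2: "(1::'a::field) + 1 = 0"
  shows "Sseq_prod C D 0 (Suc n) =
    Mat2 (Sseq C D (Suc (Suc n))) (D * Sseq C D (Suc n) ^ 2)
         (Sseq C D (Suc n)) (D * Sseq (C::'a) D n ^ 2)"
proof (induction n)
  case 0
  then show ?case by (simp add: Sseq_step_def)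
next
  case (Suc n)
  have "Sseq C D (Suc (Suc n)) ^ 2 =
      C ^ 2 ^ Suc n * Sseq C D (Suc n) ^ 2 + D ^ 2 ^ Suc n * Sseq C D n ^ 2"
    by (simp only: Sseq.simps char2_square_add[OF char2] power_mult_distrib power_mult[symmetric]
        mult.commute power_Suc)
  then show ?case
    by (simp add: Sseq_prod.simps(2)[of C D 0 "Suc n"] Suc.IH Sseq_step_def algebra_simps
        Sseq.simps(3)[of C D "Suc n"] del: Sseq.simps Sseq_prod.simps)
qed

lemma Sseq_dual:
  assumes char2: "(1::'a::field) + 1 = 0"
  shows "Sseq C D (Suc (Suc n)) = C * Sseq C D (Suc n) ^ 2 + D ^ 2 * Sseq (C::'a) D n ^ 4"
proof (cases n)
  case (Suc k)
  \<comment> \<open>split off the rightmost factor of the product instead of the leftmost one\<close>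
  have "Sseq_prod C D 0 (Suc (Suc k)) =
      mat2_mult (mat2_frob (Sseq_prod C D 0 (Suc k))) (Sseq_step C D 0)"
    by (simp only: Sseq_prod_Suc_right[of C D 0 "Suc k"] mat2_frob_Sseq_prod[OF char2])
  then show ?thesis
    using Suc by (simp add: Sseq_prod_eq[OF char2] Sseq_step_def power_mult_distrib mult.commute
        flip: power_mult del: Sseq.simps Sseq_prod.simps)
qed simp

definition Sseq_trace :: "'a::field \<Rightarrow> 'a \<Rightarrow> nat \<Rightarrow> 'a" where
  "Sseq_trace C D m = mat2_trace (Sseq_prod C D 0 m)"

lemma Sseq_trace_eq:
  assumes char2: "(1::'a::field) + 1 = 0" and "0 < m"
  shows "Sseq_trace C D m = Sseq C D (Suc m) + D * Sseq (C::'a) D (m - 1) ^ 2"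
  using \<open>0 < m\<close>
  by (cases m) (simp_all add: Sseq_trace_def Sseq_prod_eq[OF char2] del: Sseq.simps Sseq_prod.simps)

lemma Sseq_trace_idem:
  assumes char2: "(1::'a::field) + 1 = 0"
    and C: "C ^ (2 ^ m) = C" and D: "D ^ (2 ^ m) = D" and "D \<noteq> 0"
  shows "Sseq_trace C D m ^ 2 = Sseq_trace (C::'a) D m"
proof -
  let ?M = "Sseq_prod C D 0 m" and ?S = "Sseq_step C D 0"
  define N where "N = Mat2 0 1 (inverse D) (- C * inverse D)"
  have SN: "mat2_mult ?S N = mat2_one" and NS: "mat2_mult N ?S = mat2_one"
    using \<open>D \<noteq> 0\<close> by (simp_all add: N_def Sseq_step_def)
  \<comment> \<open>the entrywise square of the product is its conjugate by the invertible matrix ?S\<close>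
  have "Sseq_step C D m = ?S" using C D by (simp add: Sseq_step_def)
  then have conj: "mat2_mult ?S ?M = mat2_mult (mat2_frob ?M) ?S"
    using Sseq_prod_Suc_right[of C D 0 m] by (simp add: mat2_frob_Sseq_prod[OF char2])
  have "Sseq_trace C D m ^ 2 = mat2_trace (mat2_frob ?M)"
    by (simp add: Sseq_trace_def mat2_trace_frob[OF char2])
  also have "mat2_frob ?M = mat2_mult (mat2_mult ?S ?M) N"
    by (simp add: conj mat2_mult_assoc SN)
  also have "mat2_trace \<dots> = mat2_trace (mat2_mult N (mat2_mult ?S ?M))"
    by (rule mat2_trace_mult_commute)
  also have "mat2_mult N (mat2_mult ?S ?M) = ?M"
    by (simp add: NS flip: mat2_mult_assoc)
  finally show ?thesis
    by (simp add: Sseq_trace_def)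
qed

lemma Sseq_power_fixed:
  assumes char2: "(1::'a::field) + 1 = 0" and C: "C ^ (2 ^ m) = C" and D: "D ^ (2 ^ m) = D"
  shows "Sseq C D n ^ (2 ^ m) = Sseq (C::'a) D n"
  using C D
  by (induction C D n rule: Sseq.induct)
    (simp_all add: char2_power_two_power_add[OF char2] power_mult_distrib power_fixed_power)

lemma Sseq_power_rec:
  assumes char2: "(1::'a::field) + 1 = 0"
    and C: "C ^ (2 ^ m) = C" and D: "D ^ (2 ^ m) = D" and "n + j = m"
  shows "Sseq C D (Suc (Suc n)) ^ (2 ^ j) =
    C * Sseq C D (Suc n) ^ (2 ^ j) + D * Sseq (C::'a) D n ^ (2 ^ j)"
proof -
  have "(C ^ (2 ^ n)) ^ (2 ^ j) = C" "(D ^ (2 ^ n)) ^ (2 ^ j) = D"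
    using C D \<open>n + j = m\<close> by (simp_all add: power_two_power_power_two_power)
  then show ?thesis
    by (simp only: Sseq.simps char2_power_two_power_add[OF char2] power_mult_distrib)
qed

section \<open>Linearized polynomials\<close>

definition lin4 :: "'a::comm_ring_1 \<Rightarrow> 'a \<Rightarrow> 'a \<Rightarrow> 'a" where
  "lin4 C D x = x ^ 4 + C * x ^ 2 + D * x"

definition linearized :: "(nat \<Rightarrow> 'a::comm_ring_1) \<Rightarrow> nat \<Rightarrow> 'a \<Rightarrow> 'a" where
  "linearized c n u = (\<Sum>k<n. c k * u ^ (2 ^ k))"

lemma lin4_add:
  assumes char2: "(1::'a::comm_ring_1) + 1 = 0"
  shows "lin4 C D (x + y) = lin4 C D x + lin4 C D (y::'a)"
proof -
  have "(x + y) ^ 4 = x ^ 4 + y ^ 4" using char2_power_two_power_add[OF char2, of x y 2] by simp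
  then show ?thesis by (simp add: lin4_def char2_square_add[OF char2] algebra_simps)
qed

lemma lin4_zero [simp]: "lin4 C D 0 = 0"
  by (simp add: lin4_def)

lemma lin4_monomial:
  "lin4 C D (c * u ^ (2 ^ k)) =
    c ^ 4 * u ^ (2 ^ (k + 2)) + C * c ^ 2 * u ^ (2 ^ (k + 1)) + D * c * u ^ (2 ^ k)"
  by (simp add: lin4_def power_mult_distrib power_add mult.commute flip: power_mult)

lemma linearized_Suc: "linearized c (Suc n) u = linearized c n u + c n * u ^ (2 ^ n)"
  by (simp add: linearized_def)

lemma lin4_linearized_telescope:
  assumes char2: "(1::'a::comm_ring_1) + 1 = 0"
    and rec: "\<And>k. k < n \<Longrightarrow> D * c (k + 2) = c k ^ 4 + C * c (k + 1) ^ 2"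
  shows "lin4 C D (linearized c (n + 2) u) =
    D * c 0 * u + (C * c 0 ^ 2 + D * c 1) * u ^ 2
    + (c n ^ 4 + C * c (n + 1) ^ 2) * u ^ (2 ^ (n + 2)) + c (n + 1) ^ 4 * (u::'a) ^ (2 ^ (n + 3))"
  using rec
proof (induction n)
  case 0
  have two_terms: "linearized c (0 + 2) u = c 0 * u ^ (2 ^ 0) + c 1 * u ^ (2 ^ 1)"
    by (simp add: linearized_def numeral_2_eq_2)
  show ?case
    unfolding two_terms lin4_add[OF char2] lin4_monomial by (simp add: algebra_simps eval_nat_numeral)
next
  case (Suc n)
  have cancel: "c n ^ 4 + C * c (n + 1) ^ 2 + D * c (n + 2) = 0"
    using Suc.prems[of n] char2_add_self[OF char2] by simp
  have IH: "lin4 C D (linearized c (n + 2) u) =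
      D * c 0 * u + (C * c 0 ^ 2 + D * c 1) * u ^ 2
      + (c n ^ 4 + C * c (n + 1) ^ 2) * u ^ (2 ^ (n + 2)) + c (n + 1) ^ 4 * u ^ (2 ^ (n + 3))"
    using Suc.prems by (intro Suc.IH) simp
  have "lin4 C D (linearized c (Suc n + 2) u) =
      lin4 C D (linearized c (n + 2) u) + lin4 C D (c (n + 2) * u ^ (2 ^ (n + 2)))"
    by (simp add: linearized_Suc lin4_add[OF char2])
  also have "\<dots> = D * c 0 * u + (C * c 0 ^ 2 + D * c 1) * u ^ 2
      + (c n ^ 4 + C * c (n + 1) ^ 2 + D * c (n + 2)) * u ^ (2 ^ (n + 2))
      + (c (Suc n) ^ 4 + C * c (Suc n + 1) ^ 2) * u ^ (2 ^ (Suc n + 2))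
      + c (Suc n + 1) ^ 4 * u ^ (2 ^ (Suc n + 3))"
    unfolding IH lin4_monomial by (simp add: algebra_simps power_add)
  finally show ?case
    unfolding cancel by simp
qed

lemma linearized_power_fixed:
  assumes char2: "(1::'a::comm_ring_1) + 1 = 0"
    and c: "\<And>k. c k ^ (2 ^ m) = c k" and u: "u ^ (2 ^ m) = u"
  shows "linearized c n u ^ (2 ^ m) = linearized c n (u::'a)"
  unfolding linearized_def char2_power_two_power_sum[OF char2]
  by (simp add: c power_mult_distrib power_fixed_power[OF u])

lemma linearized_trace_poly:
  fixes c :: "nat \<Rightarrow> 'a::field"
  assumes char2: "(1::'a) + 1 = 0" and "j < m" and "c j \<noteq> 0"
  obtains p where "p \<noteq> 0" and "degree p < (2 ^ m) ^ 2"
    and "\<And>x. poly p x = linearized c m (x ^ (2 ^ m) + x)"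
proof
  define p where "p = (\<Sum>k<m. monom (c k) (2 ^ m * 2 ^ k) + monom (c k) (2 ^ k))"
  show "poly p x = linearized c m (x ^ (2 ^ m) + x)" for x
    unfolding p_def poly_sum linearized_def
    by (rule sum.cong) (simp_all only: poly_add poly_monom char2_power_two_power_add[OF char2]
        power_mult distrib_left)
  have "coeff p (2 ^ j) = (\<Sum>k<m. if k = j then c k else 0)"
    unfolding p_def coeff_sum
  proof (rule sum.cong)
    fix k
    have "(2::nat) ^ m * 2 ^ k = 2 ^ (m + k)" by (simp add: power_add)
    also have "\<dots> \<noteq> 2 ^ j" using \<open>j < m\<close> by simp
    finally have "(2::nat) ^ m * 2 ^ k \<noteq> 2 ^ j" .
    then show "coeff (monom (c k) (2 ^ m * 2 ^ k) + monom (c k) (2 ^ k)) (2 ^ j) =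
        (if k = j then c k else 0)"
      by simp
  qed simp
  then show "p \<noteq> 0" using \<open>j < m\<close> \<open>c j \<noteq> 0\<close> by auto
  have "degree p \<le> 2 ^ m * 2 ^ (m - 1)"
    unfolding p_def
  proof (rule degree_sum_le)
    fix k assume "k \<in> {..<m}"
    then have k: "(2::nat) ^ k \<le> 2 ^ (m - 1)" by (intro power_increasing) auto
    have "(2::nat) ^ (m - 1) \<le> 2 ^ m * 2 ^ (m - 1)" by simp
    with k have "(2::nat) ^ m * 2 ^ k \<le> 2 ^ m * 2 ^ (m - 1)" and "(2::nat) ^ k \<le> 2 ^ m * 2 ^ (m - 1)"
      by (simp, linarith)
    then show "degree (monom (c k) (2 ^ m * 2 ^ k) + monom (c k) (2 ^ k)) \<le> 2 ^ m * 2 ^ (m - 1)"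
      by (intro degree_add_le order_trans[OF degree_monom_le])
  qed simp
  also have "\<dots> < (2 ^ m) ^ 2" using \<open>j < m\<close> by (simp add: power2_eq_square)
  finally show "degree p < (2 ^ m) ^ 2" .
qed

lemma linearized_vanishing_on_subfield:
  fixes c :: "nat \<Rightarrow> 'a::{field,finite}"
  assumes char2: "(1::'a) + 1 = 0" and card: "CARD('a) = (2 ^ m) ^ 2"
    and vanish: "\<And>u. u ^ (2 ^ m) = u \<Longrightarrow> linearized c m u = 0" and "j < m"
  shows "c j = 0"
proof (rule ccontr)
  assume "c j \<noteq> 0"
  then obtain p where "p \<noteq> 0" and deg: "degree p < CARD('a)"
    and p: "\<And>x. poly p x = linearized c m (x ^ (2 ^ m) + x)"
    using linearized_trace_poly[OF char2 \<open>j < m\<close>] card by metis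
  have "(x ^ (2 ^ m) + x) ^ (2 ^ m) = x ^ (2 ^ m) + x" for x :: 'a
    using power_card_eq_self[of x] card
    by (simp add: char2_power_two_power_add[OF char2] power2_eq_square add.commute flip: power_mult)
  then have "poly p x = 0" for x using p vanish by simp
  then have "CARD('a) \<le> degree p" using card_poly_roots_bound[OF \<open>p \<noteq> 0\<close>] by simp
  with deg show False by simp
qed

section \<open>Inverting the linearized polynomial on the subfield\<close>

text \<open>
  The paper's coefficient D^(2^k) S_(m-2-k)^(2^(k+1)) + D^(1-2^k) S_k of the inverse, split into
  its two halves (recall that Sseq C D (j + 1) = S_j).
\<close>

definition inv_coeff_lo :: "'a::field \<Rightarrow> 'a \<Rightarrow> nat \<Rightarrow> 'a" where
  "inv_coeff_lo C D k = inverse D ^ (2 ^ k - 1) * Sseq C D (Suc k)"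

definition inv_coeff_hi :: "'a::field \<Rightarrow> 'a \<Rightarrow> nat \<Rightarrow> nat \<Rightarrow> 'a" where
  "inv_coeff_hi C D m k = D ^ (2 ^ k) * Sseq C D (m - 1 - k) ^ (2 ^ (k + 1))"

definition inv_coeff :: "'a::field \<Rightarrow> 'a \<Rightarrow> nat \<Rightarrow> nat \<Rightarrow> 'a" where
  "inv_coeff C D m k = inv_coeff_hi C D m k + inv_coeff_lo C D k"

lemma inv_coeff_lo_rec:
  assumes char2: "(1::'a::field) + 1 = 0" and "D \<noteq> 0"
  shows "D * inv_coeff_lo C D (k + 2) =
    inv_coeff_lo C D k ^ 4 + C * inv_coeff_lo C (D::'a) (k + 1) ^ 2"
proof -
  define A where "A = inverse D"
  have AD: "A * D = 1" using \<open>D \<noteq> 0\<close> by (simp add: A_def)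
  obtain n where n: "2 ^ k = Suc n" using not0_implies_Suc by fastforce
  have e: "(2::nat) ^ (k + 2) - 1 = 4 * n + 3" "(2::nat) ^ k - 1 = n" "(2::nat) ^ (k + 1) - 1 = 2 * n + 1"
    using n by (simp_all add: power_add)
  have "D * inv_coeff_lo C D (k + 2) = (A * D) * A ^ (4 * n + 2) * Sseq C D (Suc (k + 2))"
    unfolding inv_coeff_lo_def A_def[symmetric] e by (simp add: algebra_simps eval_nat_numeral)
  also have "\<dots> = A ^ (4 * n + 2) * (C * Sseq C D (Suc (k + 1)) ^ 2 + D ^ 2 * Sseq C D (Suc k) ^ 4)"
    using AD Sseq_dual[OF char2, of C D "Suc k"] by simp
  also have "\<dots> = C * (A ^ (2 * n + 1) * Sseq C D (Suc (k + 1))) ^ 2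
      + (A * D) ^ 2 * (A ^ n * Sseq C D (Suc k)) ^ 4"
    by (simp add: algebra_simps power_mult_distrib power_add eval_nat_numeral flip: power_mult)
  also have "\<dots> = inv_coeff_lo C D k ^ 4 + C * inv_coeff_lo C D (k + 1) ^ 2"
    unfolding inv_coeff_lo_def A_def[symmetric] e AD by simp
  finally show ?thesis .
qed

lemma inv_coeff_hi_rec:
  assumes char2: "(1::'a::field) + 1 = 0"
    and C: "C ^ (2 ^ m) = C" and D: "D ^ (2 ^ m) = D" and "k + 3 \<le> m"
  shows "D * inv_coeff_hi C D m (k + 2) =
    inv_coeff_hi C D m k ^ 4 + C * inv_coeff_hi C (D::'a) m (k + 1) ^ 2"
proof -
  define n where "n = m - 3 - k"
  have idx: "m - 1 - k = Suc (Suc n)" "m - 1 - (k + 1) = Suc n" "m - 1 - (k + 2) = n"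
    using \<open>k + 3 \<le> m\<close> by (simp_all add: n_def)
  have frob: "Sseq C D (Suc (Suc n)) ^ (2 ^ (k + 3)) =
      C * Sseq C D (Suc n) ^ (2 ^ (k + 3)) + D * Sseq C D n ^ (2 ^ (k + 3))"
    using \<open>k + 3 \<le> m\<close> by (intro Sseq_power_rec[OF char2 C D]) (simp add: n_def)
  have pD: "(D ^ (2 ^ k)) ^ 4 = D ^ (2 ^ (k + 2))" "(D ^ (2 ^ (k + 1))) ^ 2 = D ^ (2 ^ (k + 2))"
    by (simp_all add: power_add mult.commute flip: power_mult)
  have pS: "(x ^ (2 ^ (k + 1))) ^ 4 = x ^ (2 ^ (k + 3))"
    "(x ^ (2 ^ (k + 1 + 1))) ^ 2 = x ^ (2 ^ (k + 3))"
    for x :: 'a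
    by (simp_all add: power_add mult.commute flip: power_mult)
  have "inv_coeff_hi C D m k ^ 4 + C * inv_coeff_hi C D m (k + 1) ^ 2
      = D ^ (2 ^ (k + 2)) *
        (Sseq C D (Suc (Suc n)) ^ (2 ^ (k + 3)) + C * Sseq C D (Suc n) ^ (2 ^ (k + 3)))"
    unfolding inv_coeff_hi_def idx power_mult_distrib pD pS
    by (simp only: distrib_left mult.left_commute)
  also have "Sseq C D (Suc (Suc n)) ^ (2 ^ (k + 3)) + C * Sseq C D (Suc n) ^ (2 ^ (k + 3))
      = D * Sseq C D n ^ (2 ^ (k + 3))"
    unfolding frob by (rule char2_add_add_self[OF char2])
  also have "D ^ (2 ^ (k + 2)) * (D * Sseq C D n ^ (2 ^ (k + 3))) = D * inv_coeff_hi C D m (k + 2)"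
    unfolding inv_coeff_hi_def idx by (simp add: mult.left_commute power_add mult.commute)
  finally show ?thesis
    by (rule sym)
qed

lemma inv_coeff_power_fixed:
  assumes char2: "(1::'a::field) + 1 = 0" and C: "C ^ (2 ^ m) = C" and D: "D ^ (2 ^ m) = D"
  shows "inv_coeff_lo C D k ^ (2 ^ m) = inv_coeff_lo C (D::'a) k"
    and "inv_coeff C D m k ^ (2 ^ m) = inv_coeff C D m k"
proof -
  have S: "Sseq C D n ^ (2 ^ m) = Sseq C D n" for n
    by (rule Sseq_power_fixed[OF char2 C D])
  have "inverse D ^ (2 ^ m) = inverse D" using D by (simp add: power_inverse)
  then show lo: "inv_coeff_lo C D k ^ (2 ^ m) = inv_coeff_lo C D k"
    by (simp add: inv_coeff_lo_def power_mult_distrib power_fixed_power S)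
  have "inv_coeff_hi C D m k ^ (2 ^ m) = inv_coeff_hi C D m k"
    using D by (simp add: inv_coeff_hi_def power_mult_distrib power_fixed_power S)
  with lo show "inv_coeff C D m k ^ (2 ^ m) = inv_coeff C D m k"
    by (simp add: inv_coeff_def char2_power_two_power_add[OF char2])
qed

lemma lin4_linearized_inv_coeff_lo:
  assumes char2: "(1::'a::field) + 1 = 0" and "2 \<le> m"
    and D: "D ^ (2 ^ m) = D" and "D \<noteq> 0" and u: "u ^ (2 ^ m) = u"
  shows "lin4 C D (linearized (inv_coeff_lo C D) m u) =
    D * (1 + Sseq C D (Suc m)) * u + D ^ 2 * Sseq C D m ^ 4 * (u::'a) ^ 2"
proof -
  obtain n where m: "m = n + 2" using \<open>2 \<le> m\<close> by (metis add.commute le_add_diff_inverse)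
  define A where "A = inverse D"
  have AD: "A * D = 1" using \<open>D \<noteq> 0\<close> by (simp add: A_def)
  have A1: "A ^ (2 ^ m - 1) = 1"
    using power_pred_eq_one[OF D \<open>D \<noteq> 0\<close>] by (simp add: A_def power_inverse)
  have u1: "u ^ (2 ^ (n + 2)) = u" using u m by simp
  have u2: "u ^ (2 ^ (n + 3)) = u ^ 2"
    using power_two_power_power_two_power[of u "n + 2" 1] u1 by (simp add: numeral_3_eq_3)
  have lo0: "inv_coeff_lo C D 0 = 1" by (simp add: inv_coeff_lo_def)
  have lo1: "D * inv_coeff_lo C D 1 = C"
    using \<open>D \<noteq> 0\<close> by (simp add: inv_coeff_lo_def numeral_2_eq_2)
  have lo_n: "inv_coeff_lo C D n ^ 4 + C * inv_coeff_lo C D (n + 1) ^ 2 = D * Sseq C D (Suc m)"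
  proof -
    have "inv_coeff_lo C D n ^ 4 + C * inv_coeff_lo C D (n + 1) ^ 2 = D * inv_coeff_lo C D (n + 2)"
      by (rule inv_coeff_lo_rec[OF char2 \<open>D \<noteq> 0\<close>, symmetric])
    also have "inv_coeff_lo C D (n + 2) = Sseq C D (Suc m)"
      using A1 by (simp add: inv_coeff_lo_def m A_def)
    finally show ?thesis .
  qed
  have lo_Sn: "inv_coeff_lo C D (n + 1) ^ 4 = D ^ 2 * Sseq C D m ^ 4"
    using inverse_power_fourth[OF AD, of n] A1
    by (simp add: inv_coeff_lo_def A_def m power_mult_distrib)
  have tele: "lin4 C D (linearized (inv_coeff_lo C D) (n + 2) u) =
      D * inv_coeff_lo C D 0 * u + (C * inv_coeff_lo C D 0 ^ 2 + D * inv_coeff_lo C D 1) * u ^ 2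
      + (inv_coeff_lo C D n ^ 4 + C * inv_coeff_lo C D (n + 1) ^ 2) * u ^ (2 ^ (n + 2))
      + inv_coeff_lo C D (n + 1) ^ 4 * u ^ (2 ^ (n + 3))"
    by (rule lin4_linearized_telescope[OF char2]) (rule inv_coeff_lo_rec[OF char2 \<open>D \<noteq> 0\<close>])
  have "lin4 C D (linearized (inv_coeff_lo C D) m u) =
      D * 1 * u + (C * 1 ^ 2 + C) * u ^ 2 + D * Sseq C D (Suc m) * u
      + D ^ 2 * Sseq C D m ^ 4 * u ^ 2"
    unfolding m tele lo0 lo1 lo_n lo_Sn u1 u2 by (simp add: m)
  also have "\<dots> =
      D * (1 + Sseq C D (Suc m)) * u + D ^ 2 * Sseq C D m ^ 4 * u ^ 2 + (C + C) * u ^ 2"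
    by (simp add: algebra_simps)
  finally show ?thesis
    by (simp add: char2_add_self[OF char2])
qed

lemma lin4_linearized_inv_coeff_hi:
  assumes char2: "(1::'a::field) + 1 = 0" and "2 \<le> m"
    and C: "C ^ (2 ^ m) = C" and D: "D ^ (2 ^ m) = D" and u: "u ^ (2 ^ m) = u"
  shows "lin4 C D (linearized (inv_coeff_hi C D m) m u) =
    D * (1 + D * Sseq C D (m - 1) ^ 2) * u + D ^ 2 * Sseq C D m ^ 4 * (u::'a) ^ 2"
proof -
  obtain n where m: "m = n + 2" using \<open>2 \<le> m\<close> by (metis add.commute le_add_diff_inverse)
  have u1: "u ^ (2 ^ (n + 2)) = u" using u m by simp
  have u2: "u ^ (2 ^ (n + 3)) = u ^ 2"
    using power_two_power_power_two_power[of u "n + 2" 1] u1 by (simp add: numeral_3_eq_3)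
  have hi0: "inv_coeff_hi C D m 0 = D * Sseq C D (m - 1) ^ 2"
    by (simp add: inv_coeff_hi_def)
  have hi01: "C * inv_coeff_hi C D m 0 ^ 2 + D * inv_coeff_hi C D m 1 = D ^ 2 * Sseq C D m ^ 4"
  proof -
    have m2: "m = Suc (Suc n)" using m by simp
    have "Sseq C D (Suc (Suc n)) ^ (2 ^ 2) = C * Sseq C D (Suc n) ^ (2 ^ 2) + D * Sseq C D n ^ (2 ^ 2)"
      by (rule Sseq_power_rec[OF char2 C D]) (simp add: m)
    then show ?thesis
      by (simp add: inv_coeff_hi_def m2 power_mult_distrib algebra_simps eval_nat_numeral
          flip: power_mult del: Sseq.simps)
  qed
  have hi_n: "inv_coeff_hi C D m n ^ 4 = D"
    using D by (simp add: inv_coeff_hi_def m power_add mult.commute zero_power flip: power_mult)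
  have hi_Sn: "inv_coeff_hi C D m (n + 1) = 0"
    by (simp add: inv_coeff_hi_def m)
  have tele: "lin4 C D (linearized (inv_coeff_hi C D m) (n + 2) u) =
      D * inv_coeff_hi C D m 0 * u
      + (C * inv_coeff_hi C D m 0 ^ 2 + D * inv_coeff_hi C D m 1) * u ^ 2
      + (inv_coeff_hi C D m n ^ 4 + C * inv_coeff_hi C D m (n + 1) ^ 2) * u ^ (2 ^ (n + 2))
      + inv_coeff_hi C D m (n + 1) ^ 4 * u ^ (2 ^ (n + 3))"
    by (rule lin4_linearized_telescope[OF char2], rule inv_coeff_hi_rec[OF char2 C D]) (simp add: m)
  have shift: "linearized (inv_coeff_hi C D m) m u = linearized (inv_coeff_hi C D m) (n + 2) u"
    using m by simp
  show ?thesis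
    unfolding shift tele hi01 hi_n hi_Sn u1 u2 unfolding hi0 by (simp add: algebra_simps)
qed

lemma lin4_linearized_inv_coeff:
  assumes char2: "(1::'a::field) + 1 = 0" and "0 < m"
    and C: "C ^ (2 ^ m) = C" and D: "D ^ (2 ^ m) = D" and "D \<noteq> 0" and u: "u ^ (2 ^ m) = u"
  shows "lin4 C D (linearized (inv_coeff C D m) m u) = D * Sseq_trace C D m * (u::'a)"
proof (cases "m = 1")
  case True
  have "D = 1" using power_pred_eq_one[OF D \<open>D \<noteq> 0\<close>] True by simp
  have "u ^ 2 = u" using u True by simp
  then have "u ^ 4 = u" by (metis power2_eq_square power_mult numeral_Bit0 mult_2 power_add)
  have "linearized (inv_coeff C D m) m u = u"
    by (simp add: True linearized_def inv_coeff_def inv_coeff_hi_def inv_coeff_lo_def)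
  then have "lin4 C D (linearized (inv_coeff C D m) m u) = u + C * u + u"
    using \<open>D = 1\<close> \<open>u ^ 2 = u\<close> \<open>u ^ 4 = u\<close> by (simp add: lin4_def)
  also have "\<dots> = C * u"
    by (rule char2_add_add_self[OF char2])
  also have "\<dots> = D * Sseq_trace C D m * u"
    using \<open>D = 1\<close> by (simp add: True Sseq_trace_eq[OF char2] numeral_2_eq_2)
  finally show ?thesis .
next
  case False
  then have "2 \<le> m" using \<open>0 < m\<close> by simp
  let ?Y = "D ^ 2 * Sseq C D m ^ 4 * u ^ 2"
  have "linearized (inv_coeff C D m) m u =
      linearized (inv_coeff_hi C D m) m u + linearized (inv_coeff_lo C D) m u"
    by (simp add: linearized_def inv_coeff_def distrib_right sum.distrib)
  then have "lin4 C D (linearized (inv_coeff C D m) m u) =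
      (D * (1 + D * Sseq C D (m - 1) ^ 2) * u + ?Y) + (D * (1 + Sseq C D (Suc m)) * u + ?Y)"
    using lin4_linearized_inv_coeff_hi[OF char2 \<open>2 \<le> m\<close> C D u]
      lin4_linearized_inv_coeff_lo[OF char2 \<open>2 \<le> m\<close> D \<open>D \<noteq> 0\<close> u]
    by (simp add: lin4_add[OF char2])
  also have "\<dots> = D * Sseq_trace C D m * u + (D * u + D * u) + (?Y + ?Y)"
    by (simp add: Sseq_trace_eq[OF char2 \<open>0 < m\<close>] algebra_simps)
  finally show ?thesis
    by (simp add: char2_add_self[OF char2])
qed

lemma Sseq_trace_eq_one:
  fixes C D :: "'a::{field,finite}"
  assumes char2: "(1::'a) + 1 = 0" and card: "CARD('a) = (2 ^ m) ^ 2" and "0 < m"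
    and C: "C ^ (2 ^ m) = C" and D: "D ^ (2 ^ m) = D" and "D \<noteq> 0"
    and inj: "inj_on (lin4 C D) {x. x ^ (2 ^ m) = x}"
  shows "Sseq_trace C D m = 1"
proof (rule ccontr)
  \<comment> \<open>If the trace were 0, injectivity would make linearized (inv_coeff C D m) m vanish on the
    subfield; the values of S forced by its zero coefficients then let lin4 annihilate its lower
    half too, whose constant coefficient is 1.\<close>
  assume "Sseq_trace C D m \<noteq> 1"
  moreover have "Sseq_trace C D m * Sseq_trace C D m = Sseq_trace C D m * 1"
    using Sseq_trace_idem[OF char2 C D \<open>D \<noteq> 0\<close>] by (simp add: power2_eq_square)
  ultimately have tr0: "Sseq_trace C D m = 0" by (metis mult_left_cancel)
  have kernel: "linearized c m v = 0"
    if "\<And>k. c k ^ (2 ^ m) = c k" and "v ^ (2 ^ m) = v" and "lin4 C D (linearized c m v) = 0" for c v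
    using inj_onD[OF inj, of "linearized c m v" 0] linearized_power_fixed[OF char2 that(1,2)] that(3)
    by (simp add: zero_power)
  have coeff0: "inv_coeff C D m j = 0" if "j < m" for j
  proof (rule linearized_vanishing_on_subfield[OF char2 card _ that])
    fix v :: 'a assume v: "v ^ (2 ^ m) = v"
    show "linearized (inv_coeff C D m) m v = 0"
      using lin4_linearized_inv_coeff[OF char2 \<open>0 < m\<close> C D \<open>D \<noteq> 0\<close> v] tr0
      by (intro kernel[OF inv_coeff_power_fixed(2)[OF char2 C D] v]) simp
  qed
  have "Sseq C D m = 0"
    using coeff0[of "m - 1"] \<open>0 < m\<close> \<open>D \<noteq> 0\<close>
    by (simp add: inv_coeff_def inv_coeff_hi_def inv_coeff_lo_def zero_power)
  then have "2 \<le> m" using \<open>0 < m\<close> by (cases "m = 1") auto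
  have "D * Sseq C D (m - 1) ^ 2 = 1"
    using coeff0[of 0] \<open>0 < m\<close>
    by (simp add: inv_coeff_def inv_coeff_hi_def inv_coeff_lo_def char2_add_eq_0_iff[OF char2])
  then have "Sseq C D (Suc m) = 1"
    using tr0 by (simp add: Sseq_trace_eq[OF char2 \<open>0 < m\<close>] char2_add_eq_0_iff[OF char2])
  have "inv_coeff_lo C D 0 = 0"
  proof (rule linearized_vanishing_on_subfield[OF char2 card _ \<open>0 < m\<close>])
    fix v :: 'a assume v: "v ^ (2 ^ m) = v"
    show "linearized (inv_coeff_lo C D) m v = 0"
      using lin4_linearized_inv_coeff_lo[OF char2 \<open>2 \<le> m\<close> D \<open>D \<noteq> 0\<close> v]
        \<open>Sseq C D m = 0\<close> \<open>Sseq C D (Suc m) = 1\<close> char2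
      by (intro kernel[OF inv_coeff_power_fixed(1)[OF char2 C D] v]) simp
  qed
  then show False by (simp add: inv_coeff_lo_def)
qed

lemma lin4_linearized_inverse:
  fixes C D :: "'a::{field,finite}"
  assumes char2: "(1::'a) + 1 = 0" and card: "CARD('a) = (2 ^ m) ^ 2" and "0 < m"
    and C: "C ^ (2 ^ m) = C" and D: "D ^ (2 ^ m) = D" and "D \<noteq> 0"
    and inj: "inj_on (lin4 C D) {x. x ^ (2 ^ m) = x}" and u: "u ^ (2 ^ m) = u"
  shows "lin4 C D (linearized (inv_coeff C D m) m u) = D * u"
  using lin4_linearized_inv_coeff[OF char2 \<open>0 < m\<close> C D \<open>D \<noteq> 0\<close> u]
    Sseq_trace_eq_one[OF assms(1-7)] by simp

lemma power_int_one_minus_two_power: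
  fixes x :: "'a::field"
  shows "x powi (1 - 2 ^ k) = inverse x ^ (2 ^ k - 1)"
proof (cases k)
  case (Suc k')
  have "(1::int) \<le> 2 ^ k'" by simp
  then have "\<not> 0 \<le> (1::int) - 2 ^ k" unfolding Suc power_Suc by linarith
  moreover have "nat (- (1 - 2 ^ k)) = (2::nat) ^ k - 1" by (simp add: nat_diff_distrib nat_power_eq)
  ultimately show ?thesis by (simp add: power_int_def)
qed simp

lemma linearized_inv_coeff_eq_S:
  assumes "0 < m"
  shows "linearized (inv_coeff C D m) m u =
    (\<Sum>k = 0..m - 1. (D ^ (2 ^ k) * (S C D (int m - 2 - int k)) ^ (2 ^ (k + 1))
       + D powi (1 - 2 ^ k) * S C D (int k)) * u ^ (2 ^ k))"
proof -
  have "{0..m - 1} = {..<m}" using assms by auto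
  moreover have "nat (int m - 2 - int k + 1) = m - 1 - k" if "k < m" for k
    using that by linarith
  moreover have "nat (int k + 1) = Suc k" for k by simp
  ultimately show ?thesis
    unfolding linearized_def
    by (intro sum.cong) (simp_all add: inv_coeff_def inv_coeff_hi_def inv_coeff_lo_def S_def
        power_int_one_minus_two_power)
qed

section \<open>The permutation polynomial\<close>

lemma trace2_power_fixed:
  fixes \<delta> :: "'a::field"
  assumes char2: "(1::'a) + 1 = 0" and q: "q = 2 ^ m" and qq: "\<And>x::'a. (x ^ q) ^ q = x"
  shows "trace2 q \<delta> ^ q = trace2 q \<delta>"
  unfolding trace2_def q char2_power_two_power_add[OF char2] using qq[of \<delta>] q by (simp add: add.commute)

lemma trace2_nonzero:
  fixes \<delta> :: "'a::field"
  assumes char2: "(1::'a) + 1 = 0" and "\<delta> ^ q \<noteq> \<delta>"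
  shows "trace2 q \<delta> \<noteq> 0"
  using assms by (auto simp: trace2_def char2_add_eq_0_iff[OF char2])

lemma trace_of_power_form:
  fixes b \<delta> t :: "'a::field"
  assumes char2: "(1::'a) + 1 = 0" and q: "q = 2 ^ m" and qq: "\<And>x::'a. (x ^ q) ^ q = x"
    and b: "b ^ q = b" and t: "t ^ q = t"
  shows "(b * (t + \<delta>) ^ (2 * q + 2 ^ i + 2)) ^ q + b * (t + \<delta>) ^ (2 * q + 2 ^ i + 2)
    = b * trace2 q \<delta> ^ (2 ^ i) * (t ^ 4 + trace2 q \<delta> ^ 2 * t ^ 2)
      + b * trace2 q \<delta> ^ (2 ^ i) * \<delta> ^ (2 * q + 2)"
proof -
  \<comment> \<open>y^e = (y^q)^2 y^(2^i) y^2, so the trace of b y^e is b (y y^q)^2 (Tr y)^(2^i)\<close>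
  define y where "y = t + \<delta>"
  have frob: "(x + z) ^ q = x ^ q + z ^ q" for x z :: 'a
    unfolding q by (rule char2_power_two_power_add[OF char2])
  have yq: "y ^ q = t + \<delta> ^ q" unfolding y_def frob t ..
  have ye: "y ^ (2 * q + 2 ^ i + 2) = (y ^ q) ^ 2 * y ^ (2 ^ i) * y ^ 2"
    by (simp add: power_add power_mult mult.commute power2_eq_square)
  have yeq: "(y ^ (2 * q + 2 ^ i + 2)) ^ q = y ^ 2 * (y ^ q) ^ (2 ^ i) * (y ^ q) ^ 2"
  proof -
    have "((y ^ q) ^ 2) ^ q = y ^ 2" by (metis power_mult mult.commute qq)
    moreover have "(y ^ (2 ^ i)) ^ q = (y ^ q) ^ (2 ^ i)" "(y ^ 2) ^ q = (y ^ q) ^ 2"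
      by (metis power_mult mult.commute)+
    ultimately show ?thesis unfolding ye power_mult_distrib by simp
  qed
  have trace_y: "y + y ^ q = trace2 q \<delta>"
  proof -
    have "y + y ^ q = (t + t) + (\<delta> + \<delta> ^ q)" unfolding yq by (simp add: y_def algebra_simps)
    then show ?thesis by (simp add: char2_add_self[OF char2] trace2_def)
  qed
  have "y ^ (2 ^ i) + (y ^ q) ^ (2 ^ i) = trace2 q \<delta> ^ (2 ^ i)"
    by (simp add: char2_power_two_power_add[OF char2] flip: trace_y)
  moreover have "(y * y ^ q) ^ 2 = t ^ 4 + trace2 q \<delta> ^ 2 * t ^ 2 + \<delta> ^ (2 * q + 2)"
  proof -
    have "y * y ^ q = t ^ 2 + trace2 q \<delta> * t + \<delta> * \<delta> ^ q"
      unfolding yq by (simp add: y_def trace2_def algebra_simps power2_eq_square)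
    then have "(y * y ^ q) ^ 2 = t ^ 4 + trace2 q \<delta> ^ 2 * t ^ 2 + (\<delta> * \<delta> ^ q) ^ 2"
      by (simp add: char2_square_add[OF char2] power_mult_distrib flip: power_mult)
    also have "(\<delta> * \<delta> ^ q) ^ 2 = \<delta> ^ 2 * \<delta> ^ (2 * q)"
      by (simp only: power_mult_distrib power_mult[symmetric] mult.commute)
    also have "\<delta> ^ 2 * \<delta> ^ (2 * q) = \<delta> ^ (2 * q + 2)"
      by (simp only: power_add[symmetric] add.commute)
    finally show ?thesis .
  qed
  moreover have "(b * y ^ (2 * q + 2 ^ i + 2)) ^ q + b * y ^ (2 * q + 2 ^ i + 2)
      = b * ((y * y ^ q) ^ 2 * (y ^ (2 ^ i) + (y ^ q) ^ (2 ^ i)))"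
    unfolding power_mult_distrib b yeq by (subst ye) (simp add: algebra_simps power_mult_distrib)
  ultimately show ?thesis
    unfolding y_def by (simp add: algebra_simps)
qed

lemma inj_on_lin4_of_perm:
  fixes h :: "'a::comm_ring_1 \<Rightarrow> 'a"
  assumes char2: "(1::'a) + 1 = 0" and q: "q = 2 ^ m"
    and inj: "inj (\<lambda>x. h (x ^ q + x) + x)" and AD: "A * D = 1"
    and trace_h: "\<And>t. t ^ q = t \<Longrightarrow> h t ^ q + h t = A * (t ^ 4 + C * t ^ 2) + B"
  shows "inj_on (lin4 C D) {x. x ^ q = x}"
proof -
  have frob: "(x + y) ^ q = x ^ q + y ^ q" for x y :: 'a
    unfolding q by (rule char2_power_two_power_add[OF char2])
  have zero: "(0::'a) ^ q = 0" by (simp add: q zero_power)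
  have kernel: "s = 0" if s: "s ^ q = s" and "lin4 C D s = 0" for s
  proof -
    \<comment> \<open>w has trace s and the same image as 0 under the permutation\<close>
    define w where "w = h s + h 0"
    have "s ^ 4 + C * s ^ 2 = D * s"
      using \<open>lin4 C D s = 0\<close> by (simp add: lin4_def char2_add_eq_0_iff[OF char2])
    then have "A * (s ^ 4 + C * s ^ 2) = s" using AD by (simp add: mult.assoc[symmetric])
    then have "w ^ q + w = s + (B + B)"
      using trace_h[OF s] trace_h[OF zero] by (simp add: w_def frob algebra_simps)
    then have trace_w: "w ^ q + w = s" by (simp add: char2_add_self[OF char2])
    have "h (w ^ q + w) + w = h (0 ^ q + 0) + 0"
      unfolding trace_w zero unfolding w_def
      by (simp only: add.assoc[symmetric] char2_add_self[OF char2] add_0_left add_0_right)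
    then have "w = 0" using injD[OF inj] by blast
    then show "s = 0" using trace_w zero by simp
  qed
  show ?thesis
  proof (rule inj_onI)
    fix x y assume "x \<in> {x. x ^ q = x}" "y \<in> {x. x ^ q = x}" "lin4 C D x = lin4 C D y"
    then have "(x + y) ^ q = x + y" and "lin4 C D (x + y) = 0"
      by (simp_all only: mem_Collect_eq frob lin4_add[OF char2] char2_add_self[OF char2])
    then show "x = y" using kernel char2_add_eq_0_iff[OF char2] by blast
  qed
qed

lemma trace_perm_inverse:
  fixes h R :: "'a::comm_ring_1 \<Rightarrow> 'a" and q :: nat
  defines "P \<equiv> \<lambda>x. h (x ^ q + x) + x"
  assumes char2: "(1::'a) + 1 = 0" and q: "q = 2 ^ m" and qq: "\<And>x::'a. (x ^ q) ^ q = x"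
    and bij: "bij P" and AD: "A * D = 1"
    and trace_h: "\<And>t. t ^ q = t \<Longrightarrow> h t ^ q + h t = A * (t ^ 4 + C * t ^ 2) + B"
    and inj: "inj_on (lin4 C D) {x. x ^ q = x}"
    and R_fixed: "\<And>u. u ^ q = u \<Longrightarrow> R u ^ q = R u"
    and R_inv: "\<And>u. u ^ q = u \<Longrightarrow> lin4 C D (R u) = D * u"
  shows "P (y + h (R (y ^ q + y + B))) = y \<and> P y + h (R (P y ^ q + P y + B)) = y"
proof -
  have frob: "(x + z) ^ q = x ^ q + z ^ q" for x z :: 'a
    unfolding q by (rule char2_power_two_power_add[OF char2])
  have trace_fixed: "(z ^ q + z) ^ q = z ^ q + z" for z :: 'a
    using qq[of z] by (simp add: frob add.commute)
  have "B = h 0 ^ q + h 0"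
    using trace_h[of 0] by (simp add: q zero_power)
  then have B: "B ^ q = B" by (simp add: trace_fixed)
  have left_inv: "P x + h (R (P x ^ q + P x + B)) = x" for x
  proof -
    define t where "t = x ^ q + x"
    define u where "u = P x ^ q + P x + B"
    have t: "t ^ q = t" by (simp add: t_def trace_fixed)
    have u: "u ^ q = u" by (simp add: u_def frob qq B add_ac)
    have Px: "P x = h t + x" by (simp add: P_def t_def)
    have "u = (h t ^ q + h t) + t + B"
      unfolding u_def Px frob t_def by (simp add: algebra_simps)
    also have "\<dots> = A * (t ^ 4 + C * t ^ 2) + A * D * t + (B + B)"
      using trace_h[OF t] AD by (simp add: algebra_simps)
    also have "\<dots> = A * lin4 C D t"
      by (simp add: lin4_def char2_add_self[OF char2] algebra_simps)
    finally have "lin4 C D (R u) = lin4 C D t"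
      using R_inv[OF u] AD by (simp add: mult.assoc[symmetric] mult.commute[of D A])
    then have "R u = t" using inj_onD[OF inj] R_fixed[OF u] t by simp
    show ?thesis
      unfolding u_def[symmetric] unfolding \<open>R u = t\<close> Px by (rule char2_add_add_self[OF char2])
  qed
  obtain x where "y = P x" using bij by (metis bij_pointE)
  then show ?thesis using left_inv by simp
qed

theorem theorem3p13:
  fixes m i q :: nat and b \<delta> :: "'a::{field,finite}"
  assumes m_pos: "m > 0"
    and q_def: "q = 2 ^ m"
    and card: "CARD('a) = q ^ 2"
    and b_Fq: "b ^ q = b" and b_nz: "b \<noteq> 0"
    and delta_notin: "\<delta> ^ q \<noteq> \<delta>"
    and perm: "bij (\<lambda>x::'a. b * (x ^ q + x + \<delta>) ^ (2 * q + 2 ^ i + 2) + x)"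
  shows
    "let P = (\<lambda>x::'a. b * (x ^ q + x + \<delta>) ^ (2 * q + 2 ^ i + 2) + x);
         A = b * (trace2 q \<delta>) ^ (2 ^ i);
         B = b * (trace2 q \<delta>) ^ (2 ^ i) * \<delta> ^ (2 * q + 2);
         C = (trace2 q \<delta>) ^ 2;
         D = 1 / A;
         Pinv = (\<lambda>x::'a. x + b * (\<delta> + (\<Sum>k = 0..m - 1.
                   (D ^ (2 ^ k) * (S C D (int m - 2 - int k)) ^ (2 ^ (k + 1))
                    + D powi (1 - 2 ^ k) * S C D (int k)) * (x ^ q + x + B) ^ (2 ^ k)))
                  ^ (2 * q + 2 ^ i + 2))
     in \<forall>c. P (Pinv c) = c \<and> Pinv (P c) = c"
proof -
  have char2: "(1::'a) + 1 = 0" using card q_def m_pos by (intro char2_of_even_card) simp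
  have qq: "(x ^ q) ^ q = x" for x :: 'a
    using power_card_eq_self[of x] card by (simp add: power2_eq_square flip: power_mult)
  define A where "A = b * trace2 q \<delta> ^ (2 ^ i)"
  define C where "C = trace2 q \<delta> ^ 2"
  define D where "D = 1 / A"
  define B where "B = A * \<delta> ^ (2 * q + 2)"
  define h where "h t = b * (t + \<delta>) ^ (2 * q + 2 ^ i + 2)" for t
  define R where "R = linearized (inv_coeff C D m) m"
  have "A ^ q = A" "A \<noteq> 0" "C ^ q = C"
    using trace2_power_fixed[OF char2 q_def qq] trace2_nonzero[OF char2 delta_notin] b_Fq b_nz
    by (simp_all add: A_def C_def power_mult_distrib power_fixed_power)
  then have AD: "A * D = 1" and "D \<noteq> 0" and C: "C ^ (2 ^ m) = C" and D: "D ^ (2 ^ m) = D"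
    by (simp_all add: D_def q_def power_one_over)
  have trace_h: "h t ^ q + h t = A * (t ^ 4 + C * t ^ 2) + B" if "t ^ q = t" for t
    using trace_of_power_form[OF char2 q_def qq b_Fq that, of \<delta> i]
    by (simp add: h_def A_def B_def C_def algebra_simps)
  have bij: "bij (\<lambda>x. h (x ^ q + x) + x)" using perm by (simp add: h_def)
  have inj: "inj_on (lin4 C D) {x. x ^ q = x}"
    by (rule inj_on_lin4_of_perm[OF char2 q_def bij_is_inj[OF bij] AD trace_h])
  have R_fixed: "R u ^ q = R u" and R_inv: "lin4 C D (R u) = D * u" if "u ^ q = u" for u
    using that linearized_power_fixed[OF char2 inv_coeff_power_fixed(2)[OF char2 C D]]
      lin4_linearized_inverse[OF char2 _ m_pos C D \<open>D \<noteq> 0\<close>] card inj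
    by (simp_all add: R_def q_def)
  show ?thesis
    using trace_perm_inverse[OF char2 q_def qq bij AD trace_h inj R_fixed R_inv]
    unfolding Let_def A_def[symmetric] B_def[symmetric] C_def[symmetric]
      D_def[symmetric] linearized_inv_coeff_eq_S[OF m_pos, symmetric] R_def[symmetric]
    by (simp add: h_def add.commute)
qed

end
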